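(* If $A\subset\mathbb{R}^d$ is a finite set in general position, then for all $k\in\mathbb{N}$, $\dim(\mathrm{Del}_{\infty,k})\le\binom{d+1}{\lfloor\frac{d+1}{2}\rfloor}$.
   Context: For $\tilde A\subseteq A$ with $|\tilde A|=k$, the order-$k$ Voronoi region is $\mathrm{Vor}(\tilde A)=\{b\in\mathbb{R}^d: \|b-\tilde a\|\le\|b-a\|\ \forall\tilde a\in\tilde A, a\in A\setminus\tilde A\}$, and $\mathrm{Ball}_r(\tilde A)=\{b: \|b-\tilde a\|\le r\ \forall\tilde a\in\tilde A\}$. The order-$k$ Delaunay complex $\mathrm{Del}_{r,k}$ is the nerve of $\{\mathrm{Ball}_r(\tilde A)\cap\mathrm{Vor}(\tilde A): |\tilde A|=k\}$, i.e. the simplicial complex whose simplices are sets of $k$-subsets $\tilde A$ whose sets $\mathrm{Ball}_r(\tilde A)\cap\mathrm{Vor}(\tilde A)$ have nonempty common intersection. $\mathrm{Del}_{\infty,k}$ denotes the largest of the complexes $\mathrm{Del}_{r,k}$, $r\ge0$ (equivalently, the nerve of the order-$k$ Voronoi regions). *)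

theory Defs
  imports "HOL-Analysis.Analysis"
begin

text \<open>Points live in a Euclidean space 'a with d = DIM('a).\<close>

definition general_position :: "'a::euclidean_space set \<Rightarrow> bool" where
  "general_position A \<longleftrightarrow>
     (\<forall>B\<subseteq>A. card B \<le> DIM('a) + 1 \<longrightarrow> \<not> affine_dependent B) \<and>
     (\<forall>B\<subseteq>A. card B = DIM('a) + 2 \<longrightarrow> \<not> (\<exists>c r. \<forall>b\<in>B. dist b c = r))"

definition Vor :: "'a::euclidean_space set \<Rightarrow> 'a set \<Rightarrow> 'a set" where
  "Vor A At = {b. \<forall>t\<in>At. \<forall>a\<in>A - At. dist b t \<le> dist b a}"

text \<open>Order-k Delaunay complex with r = infinity: the nerve of the order-k Voronoi regions
  (simplices are nonempty sets of k-subsets of A whose regions have a common point).\<close>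
definition Del_infty :: "'a::euclidean_space set \<Rightarrow> nat \<Rightarrow> 'a set set set" where
  "Del_infty A k = {S. S \<noteq> {} \<and> S \<subseteq> {At. At \<subseteq> A \<and> card At = k} \<and>
                       (\<Inter>At\<in>S. Vor A At) \<noteq> {}}"

definition complex_dim :: "'b set set \<Rightarrow> int" where
  "complex_dim K = (if K = {} then -1 else int (Max (card ` K)) - 1)"

end

theory Submission
  imports Defs
begin

text \<open>Let b be a common point of the Voronoi regions of a simplex S. Each k-set X with
  b \<in> Vor A X consists of the k points of A nearest to b, so the sets in S differ only in
  how they break ties on one sphere around b: all of them contain the points of A inside
  the open ball and lie in the closed ball. Hence S injects into the subsets of a fixed size
  of the points of A on that sphere, of which there are at most d + 1 by general position.\<close>

lemma card_family_between_le:
  assumes "finite U" and between: "\<And>X. X \<in> F \<Longrightarrow> L \<subseteq> X \<and> X \<subseteq> U \<and> card X = k"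
  shows "card F \<le> card (U - L) choose (k - card L)"
proof -
  have card_Diff: "card (X - L) = k - card L" if "X \<in> F" for X
    using between[OF that] \<open>finite U\<close> by (metis card_Diff_subset finite_subset)
  have "inj_on (\<lambda>X. X - L) F"
    by (rule inj_onI) (metis Diff_partition between)
  then have "card F = card ((\<lambda>X. X - L) ` F)"
    by (simp add: card_image)
  also have "\<dots> \<le> card {B. B \<subseteq> U - L \<and> card B = k - card L}"
    using between card_Diff \<open>finite U\<close> by (intro card_mono) auto
  also have "\<dots> = card (U - L) choose (k - card L)"
    using \<open>finite U\<close> by (simp add: n_subsets)
  finally show ?thesis .
qed

lemma general_position_card_sphere:
  fixes A :: "'a::euclidean_space set"
  assumes "general_position A"
  shows "card (A \<inter> sphere b r) \<le> DIM('a) + 1"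
proof (rule ccontr)
  assume "\<not> card (A \<inter> sphere b r) \<le> DIM('a) + 1"
  then have "DIM('a) + 2 \<le> card (A \<inter> sphere b r)"
    by linarith
  then obtain B where "B \<subseteq> A \<inter> sphere b r" and "card B = DIM('a) + 2"
    by (rule obtain_subset_with_card_n)
  then have "\<forall>x\<in>B. dist x b = r"
    by (auto simp: dist_commute)
  with \<open>B \<subseteq> A \<inter> sphere b r\<close> \<open>card B = DIM('a) + 2\<close> assms show False
    unfolding general_position_def by blast
qed

lemma Vor_ball_subset:
  assumes "b \<in> Vor A X" and "x \<in> X"
  shows "A \<inter> ball b (dist b x) \<subseteq> X"
  using assms unfolding Vor_def by force

lemma Vor_card_less:
  assumes "b \<in> Vor A Y" and "X \<subseteq> A" and "finite X" and "finite Y"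
    and "X \<noteq> {}" and "Y \<noteq> {}" and "Max (dist b ` X) < Max (dist b ` Y)"
  shows "card X < card Y"
proof -
  obtain y where "y \<in> Y" and y: "dist b y = Max (dist b ` Y)"
    using \<open>finite Y\<close> \<open>Y \<noteq> {}\<close>
    by (metis (mono_tags, lifting) Max_in finite_imageI image_iff image_is_empty)
  have closer: "dist b x < dist b y" if "x \<in> X" for x
  proof -
    have "dist b x \<le> Max (dist b ` X)"
      using \<open>finite X\<close> that by simp
    then show ?thesis
      using assms(7) y by linarith
  qed
  then have "X \<subseteq> A \<inter> ball b (dist b y)"
    using assms(2) by auto
  also have "\<dots> \<subseteq> Y"
    using Vor_ball_subset[OF assms(1) \<open>y \<in> Y\<close>] .
  finally have "X \<subset> Y"
    using \<open>y \<in> Y\<close> closer by blast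
  then show ?thesis
    by (rule psubset_card_mono[OF \<open>finite Y\<close>])
qed

lemma Del_infty_simplex_between_balls:
  assumes "finite A" and "S \<in> Del_infty A k"
  obtains b r where "\<And>X. X \<in> S \<Longrightarrow> A \<inter> ball b r \<subseteq> X \<and> X \<subseteq> A \<inter> cball b r"
proof -
  have "S \<noteq> {}" and sets: "\<And>X. X \<in> S \<Longrightarrow> X \<subseteq> A \<and> card X = k"
    and "(\<Inter>X\<in>S. Vor A X) \<noteq> {}"
    using assms(2) unfolding Del_infty_def by auto
  then obtain b X0 where b: "\<And>X. X \<in> S \<Longrightarrow> b \<in> Vor A X" and "X0 \<in> S"
    by blast
  have fin: "finite X" if "X \<in> S" for X
    using sets[OF that] \<open>finite A\<close> finite_subset by blast
  show ?thesis
  \<comment> \<open>For k = 0 the radius Max (dist b ` {}) is meaningless, but r = 0 works.\<close>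
  proof (cases "k = 0")
    case True
    then have "X = {}" if "X \<in> S" for X
      using sets[OF that] fin[OF that] by simp
    then show ?thesis
      by (intro that[of b 0]) auto
  next
    case False
    define r where "r X = Max (dist b ` X)" for X
    have nonempty: "X \<noteq> {}" if "X \<in> S" for X
      using sets[OF that] False by auto
    have same_radius: "r X = r X0" if "X \<in> S" for X
      using Vor_card_less[OF b[OF that] _ fin[OF \<open>X0 \<in> S\<close>] fin[OF that]]
        Vor_card_less[OF b[OF \<open>X0 \<in> S\<close>] _ fin[OF that] fin[OF \<open>X0 \<in> S\<close>]]
        nonempty[OF that] nonempty[OF \<open>X0 \<in> S\<close>] sets[OF that] sets[OF \<open>X0 \<in> S\<close>]
      unfolding r_def by (metis not_less_iff_gr_or_eq)
    have "A \<inter> ball b (r X0) \<subseteq> X \<and> X \<subseteq> A \<inter> cball b (r X0)" if X: "X \<in> S" for X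
    proof -
      obtain x where "x \<in> X" and "dist b x = r X"
        using fin[OF X] nonempty[OF X] unfolding r_def
        by (metis (mono_tags, lifting) Max_in finite_imageI image_iff image_is_empty)
      moreover have "dist b x' \<le> r X" if "x' \<in> X" for x'
        using fin[OF X] that unfolding r_def by simp
      ultimately show ?thesis
        using Vor_ball_subset[OF b[OF X] \<open>x \<in> X\<close>] same_radius[OF X] sets[OF X] by auto
    qed
    then show ?thesis
      by (rule that)
  qed
qed

lemma Del_infty_card_simplex_le:
  fixes A :: "'a::euclidean_space set"
  assumes "finite A" and "general_position A" and "S \<in> Del_infty A k"
  shows "card S \<le> (DIM('a) + 1) choose ((DIM('a) + 1) div 2)"
proof -
  obtain b r where between: "\<And>X. X \<in> S \<Longrightarrow> A \<inter> ball b r \<subseteq> X \<and> X \<subseteq> A \<inter> cball b r"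
    using Del_infty_simplex_between_balls[OF assms(1,3)] by blast
  have "\<And>X. X \<in> S \<Longrightarrow> card X = k"
    using assms(3) unfolding Del_infty_def by auto
  with between
  have "card S \<le> card (A \<inter> cball b r - A \<inter> ball b r) choose (k - card (A \<inter> ball b r))"
    using assms(1) by (intro card_family_between_le) auto
  also have "A \<inter> cball b r - A \<inter> ball b r = A \<inter> sphere b r"
    by auto
  also have "card (A \<inter> sphere b r) choose (k - card (A \<inter> ball b r))
      \<le> (DIM('a) + 1) choose (k - card (A \<inter> ball b r))"
    using general_position_card_sphere[OF assms(2)] by (rule binomial_right_mono)
  also have "\<dots> \<le> (DIM('a) + 1) choose ((DIM('a) + 1) div 2)"
    by (rule binomial_maximum)
  finally show ?thesis .
qed

lemma complex_dim_le:
  assumes "finite K" and "\<And>S. S \<in> K \<Longrightarrow> card S \<le> n"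
  shows "complex_dim K \<le> int n - 1"
proof (cases "K = {}")
  case False
  then have "Max (card ` K) \<le> n"
    using assms by simp
  then show ?thesis
    using False by (simp add: complex_dim_def)
qed (simp add: complex_dim_def)

theorem lemma13:
  fixes A :: "'a::euclidean_space set" and k :: nat
  assumes "finite A" and "general_position A"
  shows "complex_dim (Del_infty A k) \<le> int ((DIM('a) + 1) choose ((DIM('a) + 1) div 2))"
proof -
  have "Del_infty A k \<subseteq> Pow (Pow A)"
    unfolding Del_infty_def by auto
  then have "finite (Del_infty A k)"
    using assms(1) by (simp add: finite_subset)
  then have "complex_dim (Del_infty A k) \<le> int ((DIM('a) + 1) choose ((DIM('a) + 1) div 2)) - 1"
    using Del_infty_card_simplex_le[OF assms] by (rule complex_dim_le)
  then show ?thesis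
    by linarith
qed

end
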